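(* Let $\mathbb{X}=\{\mathbf{x}_1,\dots,\mathbf{x}_N\}\subset\mathbb{R}^d$ consist of distinct points, let $P=\sum_kp_k\delta_{\mathbf{x}_k}$ with $p_k>0$, $\sum_kp_k=1$, and let $Q$ be a probability on $\mathbb{R}^d$ with $Q\ll\ell_d$ whose support is connected with Lebesgue negligible boundary. Let $c(\mathbf{x},\mathbf{y})=h(\mathbf{x}-\mathbf{y})$ where $h:\mathbb{R}^d\to[0,\infty)$ is differentiable and satisfies (A1)–(A3), and assume $\int c(\mathbf{x}_i,\mathbf{y})\,dQ(\mathbf{y})<\infty$ for all $i=1,\dots,N$. Then $\operatorname{Opt}^0_c(P,Q)$ is a singleton.
   Context: $\ell_d$ is Lebesgue measure. (A1): $h$ is strictly convex on $\mathbb{R}^d$. (A2): given $r>0$ and $\theta\in(0,\pi)$ there exists $M=M(r,\theta)>0$ such that for every $\mathbf{p}\in\mathbb{R}^d$ with $|\mathbf{p}|>M$ one can find $\mathbf{z}\neq0$ such that on the cone $K(r,\theta,\mathbf{z},\mathbf{p})=\{\mathbf{x}\in\mathbb{R}^d: |\mathbf{x}-\mathbf{p}||\mathbf{z}|\cos(\theta/2)\leq\langle\mathbf{z},\mathbf{x}-\mathbf{p}\rangle\leq r|\mathbf{z}|\}$ (with vertex $\mathbf{p}$) the function $h$ attains its maximum at $\mathbf{p}$. (A3): $\lim_{|\mathbf{x}|\to\infty}h(\mathbf{x})/|\mathbf{x}|=\infty$. $\mathcal{T}_c(P,Q)=\inf_{\pi\in\Pi(P,Q)}\int c\,d\pi$;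 $g_c(P,Q,\mathbf{z})=\sum_iz_ip_i+\int\min_i\{c(\mathbf{x}_i,\mathbf{y})-z_i\}dQ(\mathbf{y})$; $\operatorname{Opt}^0_c(P,Q)=\{\mathbf{z}\in\mathbb{R}^N:\mathcal{T}_c(P,Q)=g_c(P,Q,\mathbf{z}),\ z_1=0\}$. *)

theory Defs
  imports "HOL-Probability.Probability"
begin

definition strictly_convex_on :: "'a::real_vector set \<Rightarrow> ('a \<Rightarrow> real) \<Rightarrow> bool" where
  "strictly_convex_on S f \<longleftrightarrow>
     (\<forall>x\<in>S. \<forall>y\<in>S. x \<noteq> y \<longrightarrow> (\<forall>t::real. 0 < t \<and> t < 1 \<longrightarrow>
        f ((1 - t) *\<^sub>R x + t *\<^sub>R y) < (1 - t) * f x + t * f y))"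

definition cone_K :: "real \<Rightarrow> real \<Rightarrow> 'a::euclidean_space \<Rightarrow> 'a \<Rightarrow> 'a set" where
  "cone_K r \<theta> z p = {x. norm (x - p) * norm z * cos (\<theta> / 2) \<le> inner z (x - p)
                         \<and> inner z (x - p) \<le> r * norm z}"

definition cond_A2 :: "('a::euclidean_space \<Rightarrow> real) \<Rightarrow> bool" where
  "cond_A2 h \<longleftrightarrow> (\<forall>r>0. \<forall>\<theta>. 0 < \<theta> \<and> \<theta> < pi \<longrightarrow>
     (\<exists>M>0. \<forall>p. norm p > M \<longrightarrow>
        (\<exists>z. z \<noteq> 0 \<and> (\<forall>x\<in>cone_K r \<theta> z p. h x \<le> h p))))"

definition measure_support :: "'a::metric_space measure \<Rightarrow> 'a set" where
  "measure_support Q = {x. \<forall>e>0. emeasure Q (ball x e) > 0}"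

definition discrete_measure :: "nat \<Rightarrow> (nat \<Rightarrow> 'a::topological_space) \<Rightarrow> (nat \<Rightarrow> real) \<Rightarrow> 'a measure" where
  "discrete_measure N x p = measure_of UNIV (sets borel)
     (\<lambda>A. \<Sum>k\<in>{1..N}. if x k \<in> A then ennreal (p k) else 0)"

definition couplings :: "'a::euclidean_space measure \<Rightarrow> 'a measure \<Rightarrow> ('a \<times> 'a) measure set" where
  "couplings P Q = {\<pi>. sets \<pi> = sets borel \<and> prob_space \<pi> \<and>
      (\<forall>A\<in>sets borel. emeasure \<pi> (A \<times> UNIV) = emeasure P A \<and> emeasure \<pi> (UNIV \<times> A) = emeasure Q A)}"

definition OT_cost :: "('a::euclidean_space \<Rightarrow> 'a \<Rightarrow> real) \<Rightarrow> 'a measure \<Rightarrow> 'a measure \<Rightarrow> ennreal" where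
  "OT_cost c P Q = (INF \<pi>\<in>couplings P Q. \<integral>\<^sup>+ xy. ennreal (c (fst xy) (snd xy)) \<partial>\<pi>)"

definition g_dual :: "('a::euclidean_space \<Rightarrow> 'a \<Rightarrow> real) \<Rightarrow> nat \<Rightarrow> (nat \<Rightarrow> 'a) \<Rightarrow> (nat \<Rightarrow> real)
                        \<Rightarrow> 'a measure \<Rightarrow> (nat \<Rightarrow> real) \<Rightarrow> real" where
  "g_dual c N x p Q z = (\<Sum>i\<in>{1..N}. z i * p i)
     + (\<integral>y. Min ((\<lambda>i. c (x i) y - z i) ` {1..N}) \<partial>Q)"

definition Opt0 :: "('a::euclidean_space \<Rightarrow> 'a \<Rightarrow> real) \<Rightarrow> nat \<Rightarrow> (nat \<Rightarrow> 'a) \<Rightarrow> (nat \<Rightarrow> real)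
                    \<Rightarrow> 'a measure \<Rightarrow> (nat \<Rightarrow> real) set" where
  "Opt0 c N x p Q = {z. z \<in> extensional {1..N} \<and> z 1 = 0 \<and>
      OT_cost c (discrete_measure N x p) Q < \<infinity> \<and>
      enn2real (OT_cost c (discrete_measure N x p) Q) = g_dual c N x p Q z}"

end

theory Submission
  imports Defs
begin

(*
  Write g(z) = (SUM i. z_i p_i) + integral of min_i (c(x_i, y) - z_i) dQ(y) for the dual
  functional and S_i(z) for the Laguerre cell of the points y at which the index i attains
  this minimum strictly.

  Weak duality gives g <= T_c everywhere.  Strict convexity of h makes c(x_i, .) - c(x_j, .)
  strictly decreasing along x_i - x_j, so its level sets are Lebesgue null and, since Q << l_d,
  the cells S_i(z) cover Q-almost all of R^d.  The functional g is continuous, invariant under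
  adding a constant to z, and tends to -infinity as max z - min z grows; hence it attains its
  maximum, and at a maximiser the one-sided derivatives in the directions e_i force
  Q(S_i(z)) = p_i.  For such a balanced z the map sending S_i(z) to x_i transports Q to P at
  cost g(z), so T_c = max g and Opt^0 consists of the balanced z with z_1 = 0.

  Two balanced z, w with z_1 = w_1 coincide.  Otherwise let I be the set of indices where w - z
  is maximal.  Passing from z to w, the region where an index of I attains the minimum gains
  an open set; both regions have mass (SUM i:I. p_i), so this open set is Q-null and misses the
  connected support, which forces the region to have mass 0 or 1, a contradiction.
*)

section \<open>Strict convexity and null level sets\<close>

lemma convex_on_if_strictly_convex_on:
  assumes "strictly_convex_on S f" "convex S"
  shows "convex_on S f"
proof (rule convex_onI[OF _ assms(2)])
  fix t :: real and x y assume "0 < t" "t < 1" "x \<in> S" "y \<in> S"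
  with assms(1) show "f ((1 - t) *\<^sub>R x + t *\<^sub>R y) \<le> (1 - t) * f x + t * f y"
    unfolding strictly_convex_on_def
    by (cases "x = y") (auto simp: scaleR_collapse algebra_simps intro: less_imp_le)
qed

lemma strictly_convex_on_secant_sum:
  fixes f :: "'a::real_vector \<Rightarrow> real"
  assumes f: "strictly_convex_on UNIV f" and "u \<noteq> 0" "s > 0"
  shows "f (w + u) + f (w + s *\<^sub>R u) < f w + f (w + (1 + s) *\<^sub>R u)"
proof -
  let ?v = "w + (1 + s) *\<^sub>R u"
  have "w \<noteq> ?v" using assms by (auto simp: add_pos_pos)
  then have convex: "f (w + (t * (1 + s)) *\<^sub>R u) < (1 - t) * f w + t * f ?v"
    if "0 < t" "t < 1" for t
  proof -
    have "(1 - t) *\<^sub>R w + t *\<^sub>R ?v = w + (t * (1 + s)) *\<^sub>R u"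
      by (simp add: algebra_simps)
    then show ?thesis
      using f that \<open>w \<noteq> ?v\<close> unfolding strictly_convex_on_def by fastforce
  qed
  define a where "a = 1 / (1 + s)"
  have a: "0 < a" "a < 1" "a * (1 + s) = 1" "(1 - a) * (1 + s) = s"
    using \<open>s > 0\<close> by (auto simp: a_def field_simps)
  have "f (w + u) < (1 - a) * f w + a * f ?v"
    using convex[of a] a by simp
  moreover have "f (w + s *\<^sub>R u) < (1 - (1 - a)) * f w + (1 - a) * f ?v"
    using convex[of "1 - a"] a by simp
  ultimately show ?thesis
    by (simp add: algebra_simps)
qed

lemma measure_zero_if_disjoint_translates:
  fixes B :: "'a::euclidean_space set" and c :: "nat \<Rightarrow> 'a"
  assumes B: "B \<in> lmeasurable" "bounded B" and c: "bounded (range c)"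
    and disjoint: "disjoint_family (\<lambda>k. (+) (c k) ` B)"
  shows "measure lebesgue B = 0"
proof (rule ccontr)
  define T where "T k = (+) (c k) ` B" for k
  have T: "T k \<in> lmeasurable" "measure lebesgue (T k) = measure lebesgue B" for k
    unfolding T_def using B(1) by (auto intro: measurable_translation measure_translation)
  obtain rB rc where rB: "\<And>y. y \<in> B \<Longrightarrow> norm y \<le> rB" and rc: "\<And>k. norm (c k) \<le> rc"
    using B(2) c unfolding bounded_iff by auto
  have T_bounded: "T k \<subseteq> cball 0 (rc + rB)" for k
  proof (unfold T_def, rule image_subsetI)
    fix y assume "y \<in> B"
    then show "c k + y \<in> cball 0 (rc + rB)"
      using rB[of y] rc[of k] norm_triangle_ineq[of "c k" y] by simp
  qed
  assume "measure lebesgue B \<noteq> 0"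
  then have "measure lebesgue B > 0"
    using measure_nonneg[of lebesgue B] by linarith
  then obtain K where K: "measure lebesgue (cball (0::'a) (rc + rB)) < real K * measure lebesgue B"
    using reals_Archimedean3 by blast
  have "real K * measure lebesgue B = (\<Sum>k<K. measure lebesgue (T k))"
    by (simp add: T(2))
  also have "\<dots> = measure lebesgue (\<Union>k<K. T k)"
    using disjoint fmeasurableD2[OF T(1)] unfolding T_def[symmetric]
    by (intro measure_finite_Union[symmetric])
      (auto simp: disjoint_family_on_def intro: fmeasurableD T(1))
  also have "\<dots> \<le> measure lebesgue (cball (0::'a) (rc + rB))"
  proof (rule measure_mono_fmeasurable)
    show "(\<Union>k<K. T k) \<subseteq> cball 0 (rc + rB)"
      using T_bounded by blast
    show "(\<Union>k<K. T k) \<in> sets lebesgue"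
      by (intro sets.finite_UN fmeasurableD[OF T(1)]) auto
  qed (rule lmeasurable_cball)
  finally show False
    using K by simp
qed

lemma level_set_null_if_strictly_decreasing:
  fixes f :: "'a::euclidean_space \<Rightarrow> real"
  assumes f: "f \<in> borel_measurable borel" and "u \<noteq> 0"
    and decreasing: "\<And>y s. s > 0 \<Longrightarrow> f (y + s *\<^sub>R u) < f y"
  shows "{y. f y = t} \<in> null_sets lborel"
proof -
  define E where "E = {y. f y = t}"
  have E_borel: "E \<in> sets borel"
    unfolding E_def using f by measurable
  have same_shift: "a = b" if "y \<in> E" "y' \<in> E" "a *\<^sub>R u + y = b *\<^sub>R u + y'" for a b y y'
  proof (cases a b rule: linorder_cases)
    case less
    then have "f (y' + (b - a) *\<^sub>R u) < f y'"
      by (intro decreasing) simp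
    moreover have "y' + (b - a) *\<^sub>R u = y"
      using that(3) by (simp add: algebra_simps)
    ultimately show ?thesis
      using that(1,2) by (simp add: E_def)
  next
    case greater
    then have "f (y + (a - b) *\<^sub>R u) < f y"
      by (intro decreasing) simp
    moreover have "y + (a - b) *\<^sub>R u = y'"
      using that(3) by (simp add: algebra_simps)
    ultimately show ?thesis
      using that(1,2) by (simp add: E_def)
  qed
  define B where "B n = E \<inter> cball 0 (real n)" for n :: nat
  have B: "B n \<in> lmeasurable" for n
    unfolding B_def using E_borel by (intro bounded_set_imp_lmeasurable) auto
  define c where "c k = inverse (real (Suc k)) *\<^sub>R u" for k :: nat
  have "bounded (range c)"
    unfolding bounded_iff c_def by (auto intro!: exI[of _ "norm u"] mult_left_le_one_le simp: inverse_le_1_iff)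
  moreover have "disjoint_family (\<lambda>k. (+) (c k) ` B n)" for n
  proof (unfold disjoint_family_on_def, intro ballI impI)
    fix k m :: nat assume "k \<noteq> m"
    then have "inverse (real (Suc k)) \<noteq> inverse (real (Suc m))"
      by simp
    then show "(+) (c k) ` B n \<inter> (+) (c m) ` B n = {}"
      unfolding c_def B_def using same_shift by blast
  qed
  ultimately have "measure lebesgue (B n) = 0" for n
    using B by (intro measure_zero_if_disjoint_translates) (auto simp: B_def)
  then have "B n \<in> null_sets lebesgue" for n
    by (intro null_setsI fmeasurableD[OF B]) (simp add: emeasure_eq_measure2[OF B])
  moreover have "E = (\<Union>n. B n)"
  proof (intro equalityI subsetI)
    fix y assume "y \<in> E"
    moreover obtain n where "norm y \<le> real n" using real_arch_simple by blast
    ultimately show "y \<in> (\<Union>n. B n)" unfolding B_def by auto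
  qed (auto simp: B_def)
  ultimately have "E \<in> null_sets lebesgue" by auto
  moreover have "E \<in> sets lborel"
    using E_borel by simp
  ultimately show ?thesis
    unfolding E_def using null_sets_completion_iff by blast
qed

lemma continuous_on_Min_finite:
  fixes f :: "'i \<Rightarrow> 'a::topological_space \<Rightarrow> real"
  assumes "finite K" "K \<noteq> {}" "\<And>k. k \<in> K \<Longrightarrow> continuous_on UNIV (f k)"
  shows "continuous_on UNIV (\<lambda>y. Min ((\<lambda>k. f k y) ` K))"
  using assms
proof (induction K rule: finite_ne_induct)
  case (insert k K)
  have "(\<lambda>y. Min ((\<lambda>k. f k y) ` insert k K)) = (\<lambda>y. min (f k y) (Min ((\<lambda>k. f k y) ` K)))"
    using insert.hyps by auto
  then show ?case
    using insert by (auto intro!: continuous_on_min)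
qed simp

lemma connected_real_avoiding_interval:
  fixes S :: "real set"
  assumes "connected S" "S \<inter> {a<..<b} = {}" "a < b"
  shows "S \<subseteq> {..a} \<or> S \<subseteq> {b..}"
proof (rule ccontr)
  assume "\<not> ?thesis"
  then obtain y1 y2 where "y1 \<in> S" "a < y1" "y2 \<in> S" "y2 < b"
    by (auto simp: subset_eq not_le)
  with assms(2) have "y2 \<le> a" "b \<le> y1"
    by (auto simp: disjoint_iff not_less)
  then have "(a + b) / 2 \<in> S"
    using connectedD_interval[OF assms(1) \<open>y2 \<in> S\<close> \<open>y1 \<in> S\<close>] assms(3) by simp
  with assms show False
    by auto
qed

lemma AE_in_measure_support:
  fixes M :: "'a::{metric_space, second_countable_topology} measure"
  assumes M: "sets M = sets borel"
  shows "AE y in M. y \<in> measure_support M"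
proof -
  define F where "F = {B :: 'a set. open B \<and> emeasure M B = 0}"
  obtain F' where F': "F' \<subseteq> F" "countable F'" "\<Union>F' = \<Union>F"
    using Lindelof[of F] unfolding F_def by blast
  have "(\<Union>B\<in>F'. B) \<in> null_sets M"
    using F' M by (intro null_sets_UN') (auto simp: F_def intro!: null_setsI)
  moreover have "{y \<in> space M. y \<notin> measure_support M} \<subseteq> \<Union>F'"
  proof
    fix y assume "y \<in> {y \<in> space M. y \<notin> measure_support M}"
    then obtain e where "e > 0" "emeasure M (ball y e) = 0"
      unfolding measure_support_def by (auto simp: not_gr_zero)
    then have "ball y e \<in> F" "y \<in> ball y e"
      unfolding F_def by auto
    then show "y \<in> \<Union>F'"
      using F'(3) by blast
  qed
  ultimately show ?thesis
    by (auto intro: AE_I')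
qed

lemma measure_support_disjoint_open_null:
  assumes M: "sets M = sets borel" and V: "open V" "emeasure M V = 0"
  shows "V \<inter> measure_support M = {}"
proof (rule ccontr)
  assume "V \<inter> measure_support M \<noteq> {}"
  then obtain y where y: "y \<in> V" "y \<in> measure_support M" by blast
  obtain e where e: "e > 0" "ball y e \<subseteq> V"
    using V(1) y(1) open_contains_ball by blast
  have "emeasure M (ball y e) \<le> emeasure M V"
    using e(2) V(1) M by (intro emeasure_mono) auto
  with y(2) e(1) V(2) show False
    unfolding measure_support_def by auto
qed

lemma sets_discrete_measure [simp]: "sets (discrete_measure N x p) = sets borel"
  using sets.sigma_sets_eq[of borel] by (simp add: discrete_measure_def)

lemma emeasure_discrete_measure:
  assumes "A \<in> sets borel"
  shows "emeasure (discrete_measure N x p) A = (\<Sum>k\<in>{1..N}. if x k \<in> A then ennreal (p k) else 0)"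
proof -
  let ?\<mu> = "\<lambda>A. \<Sum>k\<in>{1..N}. if x k \<in> A then ennreal (p k) else 0"
  have \<mu>: "?\<mu> A = (\<Sum>k\<in>{1..N}. ennreal (p k) * indicator A (x k))" for A
    by (intro sum.cong) (auto simp: indicator_def)
  have "countably_additive (sets borel) ?\<mu>"
  proof (rule countably_additiveI)
    fix F :: "nat \<Rightarrow> 'a set" assume "disjoint_family F"
    have "(\<Sum>n. ?\<mu> (F n)) = (\<Sum>k\<in>{1..N}. \<Sum>n. ennreal (p k) * indicator (F n) (x k))"
      unfolding \<mu> by (rule suminf_sum) simp
    also have "\<dots> = ?\<mu> (\<Union> (range F))"
      unfolding \<mu> using suminf_indicator[OF \<open>disjoint_family F\<close>] by simp
    finally show "(\<Sum>n. ?\<mu> (F n)) = ?\<mu> (\<Union> (range F))" .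
  qed
  then show ?thesis
    unfolding discrete_measure_def using assms sets.sigma_algebra_axioms[of borel]
    by (intro emeasure_measure_of_sigma) (auto simp: positive_def)
qed

lemma couplings_marginals:
  assumes \<pi>: "\<pi> \<in> couplings P Q" and P: "sets P = sets borel" and Q: "sets Q = sets borel"
  shows "distr \<pi> borel fst = P" "distr \<pi> borel snd = Q"
proof -
  have sets_\<pi>: "sets \<pi> = sets borel" and space_\<pi>: "space \<pi> = UNIV"
    using \<pi> sets_eq_imp_space_eq[of \<pi> borel] by (auto simp: couplings_def)
  have fst: "fst \<in> \<pi> \<rightarrow>\<^sub>M borel" and snd: "snd \<in> \<pi> \<rightarrow>\<^sub>M borel"
    using borel_measurable_continuous_onI[OF continuous_on_fst[OF continuous_on_id]]
      borel_measurable_continuous_onI[OF continuous_on_snd[OF continuous_on_id]]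
    by (simp_all add: measurable_cong_sets[OF sets_\<pi> refl])
  show "distr \<pi> borel fst = P"
  proof (rule measure_eqI)
    fix A assume "A \<in> sets (distr \<pi> borel fst)"
    moreover have "fst -` A \<inter> space \<pi> = A \<times> UNIV"
      using space_\<pi> by auto
    ultimately show "emeasure (distr \<pi> borel fst) A = emeasure P A"
      using \<pi> fst by (simp add: emeasure_distr couplings_def)
  qed (simp add: P)
  show "distr \<pi> borel snd = Q"
  proof (rule measure_eqI)
    fix A assume "A \<in> sets (distr \<pi> borel snd)"
    moreover have "snd -` A \<inter> space \<pi> = UNIV \<times> A"
      using space_\<pi> by auto
    ultimately show "emeasure (distr \<pi> borel snd) A = emeasure Q A"
      using \<pi> snd by (simp add: emeasure_distr couplings_def)
  qed (simp add: Q)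
qed

lemma integral_couplings:
  fixes f g :: "'a::euclidean_space \<Rightarrow> real"
  assumes \<pi>: "\<pi> \<in> couplings P Q" and P: "sets P = sets borel" and Q: "sets Q = sets borel"
    and f: "integrable P f" and g: "integrable Q g"
  shows "integrable \<pi> (\<lambda>uy. f (fst uy) + g (snd uy))"
    and "(\<integral>uy. f (fst uy) + g (snd uy) \<partial>\<pi>) = (\<integral>u. f u \<partial>P) + (\<integral>y. g y \<partial>Q)"
proof -
  have sets_\<pi>: "sets \<pi> = sets borel"
    using \<pi> by (simp add: couplings_def)
  have fst: "fst \<in> \<pi> \<rightarrow>\<^sub>M borel" and snd: "snd \<in> \<pi> \<rightarrow>\<^sub>M borel"
    using borel_measurable_continuous_onI[OF continuous_on_fst[OF continuous_on_id]]
      borel_measurable_continuous_onI[OF continuous_on_snd[OF continuous_on_id]]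
    by (simp_all add: measurable_cong_sets[OF sets_\<pi> refl])
  have "f \<in> borel_measurable borel" "g \<in> borel_measurable borel"
    using borel_measurable_integrable[OF f] borel_measurable_integrable[OF g]
    by (simp_all add: measurable_cong_sets[OF P refl] measurable_cong_sets[OF Q refl])
  then have "integrable \<pi> (\<lambda>uy. f (fst uy))" "integrable \<pi> (\<lambda>uy. g (snd uy))"
    and "(\<integral>uy. f (fst uy) \<partial>\<pi>) = (\<integral>u. f u \<partial>P)" "(\<integral>uy. g (snd uy) \<partial>\<pi>) = (\<integral>y. g y \<partial>Q)"
    using f g integrable_distr_eq[OF fst, of f, symmetric] integrable_distr_eq[OF snd, of g, symmetric]
      integral_distr[OF fst, of f, symmetric] integral_distr[OF snd, of g, symmetric]
    unfolding couplings_marginals[OF \<pi> P Q] by simp_all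
  then show "integrable \<pi> (\<lambda>uy. f (fst uy) + g (snd uy))"
    and "(\<integral>uy. f (fst uy) + g (snd uy) \<partial>\<pi>) = (\<integral>u. f u \<partial>P) + (\<integral>y. g y \<partial>Q)"
    by simp_all
qed

lemma AE_fst_in_couplings:
  assumes \<pi>: "\<pi> \<in> couplings P Q" and S: "S \<in> sets borel" "emeasure P (- S) = 0"
  shows "AE uy in \<pi>. fst uy \<in> S"
proof -
  have "- S \<in> sets borel"
    using S(1) by simp
  then have "emeasure \<pi> ((- S) \<times> UNIV) = 0" "(- S) \<times> UNIV \<in> sets \<pi>"
    using \<pi> S(2) by (auto simp: couplings_def borel_Times)
  then have "(- S) \<times> UNIV \<in> null_sets \<pi>"
    by (intro null_setsI)
  from AE_not_in[OF this] show ?thesis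
    by (rule eventually_mono) auto
qed

lemma measurable_graph:
  fixes T :: "'a::second_countable_topology \<Rightarrow> 'b::second_countable_topology"
  assumes "sets M = sets borel" "T \<in> borel_measurable M"
  shows "(\<lambda>y. (T y, y)) \<in> M \<rightarrow>\<^sub>M borel"
proof -
  have "(\<lambda>y. (T y, y)) \<in> M \<rightarrow>\<^sub>M borel \<Otimes>\<^sub>M borel"
    using assms by (simp add: measurable_cong_sets[OF assms(1) refl])
  then show ?thesis
    by (simp add: borel_prod)
qed

lemma graph_in_couplings:
  fixes Q :: "'a::euclidean_space measure"
  assumes Q: "prob_space Q" "sets Q = sets borel" and T: "T \<in> borel_measurable Q"
    and push: "distr Q borel T = P"
  shows "distr Q borel (\<lambda>y. (T y, y)) \<in> couplings P Q"
proof -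
  have space_Q: "space Q = UNIV"
    using sets_eq_imp_space_eq[OF Q(2)] by simp
  have graph: "(\<lambda>y. (T y, y)) \<in> Q \<rightarrow>\<^sub>M borel"
    using Q(2) T by (rule measurable_graph)
  have "emeasure (distr Q borel (\<lambda>y. (T y, y))) (A \<times> UNIV) = emeasure P A"
    "emeasure (distr Q borel (\<lambda>y. (T y, y))) (UNIV \<times> A) = emeasure Q A"
    if A: "A \<in> sets borel" for A
    using A graph T emeasure_distr[OF T A] by (simp_all add: emeasure_distr borel_Times space_Q vimage_def push)
  then show ?thesis
    using prob_space.prob_space_distr[OF Q(1) graph] by (simp add: couplings_def)
qed

lemma continuous_map_product_topology_if_Lipschitz:
  fixes f :: "('i \<Rightarrow> real) \<Rightarrow> real"
  assumes I: "finite I" and Lipschitz: "\<And>z w. \<bar>f z - f w\<bar> \<le> L * (\<Sum>i\<in>I. \<bar>z i - w i\<bar>)"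
  shows "continuous_map (product_topology (\<lambda>_. euclideanreal) I) euclideanreal f"
  unfolding continuous_map_def
proof (intro conjI allI impI)
  let ?X = "product_topology (\<lambda>_. euclideanreal) I"
  show "f \<in> topspace ?X \<rightarrow> topspace euclideanreal" by simp
  fix U :: "real set" assume "openin euclideanreal U"
  show "openin ?X {z \<in> topspace ?X. f z \<in> U}"
  proof (subst openin_subopen, intro ballI)
    fix z0 assume z0: "z0 \<in> {z \<in> topspace ?X. f z \<in> U}"
    moreover have "open U"
      using \<open>openin euclideanreal U\<close> by simp
    ultimately obtain e where e: "e > 0" "ball (f z0) e \<subseteq> U"
      using open_contains_ball_eq by blast
    define \<eta> where "\<eta> = e / (\<bar>L\<bar> * card I + 1)"
    have "0 < \<bar>L\<bar> * card I + 1"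
      by (intro add_nonneg_pos mult_nonneg_nonneg) auto
    then have \<eta>: "\<eta> > 0" "\<bar>L\<bar> * (card I * \<eta>) < e"
      using e(1) by (auto simp: \<eta>_def field_simps)
    define V where "V = (\<Pi>\<^sub>E i\<in>I. ball (z0 i) \<eta>)"
    have "f z \<in> U" if "z \<in> V" for z
    proof -
      have "(\<Sum>i\<in>I. \<bar>z i - z0 i\<bar>) \<le> card I * \<eta>"
        using sum_mono[of I "\<lambda>i. \<bar>z i - z0 i\<bar>" "\<lambda>_. \<eta>"] that
        by (force simp: V_def dist_real_def abs_minus_commute)
      then have "\<bar>f z - f z0\<bar> < e"
        using Lipschitz[of z z0] \<eta>(2) abs_ge_self[of L] sum_nonneg[of I "\<lambda>i. \<bar>z i - z0 i\<bar>"]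
        by (smt (verit, best) mult_mono)
      then show ?thesis
        using e(2) by (auto simp: dist_real_def)
    qed
    then show "\<exists>V. openin ?X V \<and> z0 \<in> V \<and> V \<subseteq> {z \<in> topspace ?X. f z \<in> U}"
      using z0 \<eta>(1) I by (intro exI[of _ V]) (auto simp: V_def openin_PiE PiE_iff)
  qed
qed

section \<open>The semi-discrete dual problem\<close>

locale semidiscrete_transport =
  Q: prob_space Q for Q :: "'a::euclidean_space measure" +
  fixes N :: nat and x :: "nat \<Rightarrow> 'a" and p :: "nat \<Rightarrow> real" and h :: "'a \<Rightarrow> real"
  assumes N: "N \<ge> 1"
    and distinct: "inj_on x {1..N}"
    and p_pos: "\<And>k. k \<in> {1..N} \<Longrightarrow> p k > 0"
    and p_sum: "(\<Sum>k\<in>{1..N}. p k) = 1"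
    and sets_Q: "sets Q = sets borel"
    and Q_ac: "absolutely_continuous lborel Q"
    and connected_support: "connected (measure_support Q)"
    and h_nonneg: "\<And>v. h v \<ge> 0"
    and h_strictly_convex: "strictly_convex_on UNIV h"
    and integrable_h: "\<And>i. i \<in> {1..N} \<Longrightarrow> integrable Q (\<lambda>y. h (x i - y))"
begin

(* cell i z is the Laguerre cell S_i(z) of x i for the weights z, and lower_env {1..N} z is the
   integrand min_i (c(x_i, y) - z_i) of the dual functional g_dual. *)
definition cost :: "nat \<Rightarrow> 'a \<Rightarrow> real" where
  "cost i y = h (x i - y)"

definition lower_env :: "nat set \<Rightarrow> (nat \<Rightarrow> real) \<Rightarrow> 'a \<Rightarrow> real" where
  "lower_env K z y = Min ((\<lambda>k. cost k y - z k) ` K)"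

abbreviation dual :: "(nat \<Rightarrow> real) \<Rightarrow> real" where
  "dual \<equiv> g_dual (\<lambda>u v. h (u - v)) N x p Q"

definition cell :: "nat \<Rightarrow> (nat \<Rightarrow> real) \<Rightarrow> 'a set" where
  "cell i z = {y. \<forall>j\<in>{1..N}. j \<noteq> i \<longrightarrow> cost i y - z i < cost j y - z j}"

definition weak_cell :: "nat \<Rightarrow> (nat \<Rightarrow> real) \<Rightarrow> 'a set" where
  "weak_cell i z = {y. \<forall>j\<in>{1..N}. j \<noteq> i \<longrightarrow> cost i y - z i \<le> cost j y - z j}"

definition ties :: "(nat \<Rightarrow> real) \<Rightarrow> 'a set" where
  "ties z = (\<Union>i\<in>{1..N}. \<Union>j\<in>{1..N} - {i}. {y. cost i y - z i = cost j y - z j})"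

definition balanced :: "(nat \<Rightarrow> real) \<Rightarrow> bool" where
  "balanced z \<longleftrightarrow> (\<forall>i\<in>{1..N}. measure Q (cell i z) = p i)"

lemma space_Q [simp]: "space Q = UNIV"
  using sets_eq_imp_space_eq[OF sets_Q] by simp

lemma prob_UNIV [simp]: "measure Q UNIV = 1"
  using Q.prob_space by simp

declare sets_Q [measurable_cong]

lemma one_in_indices: "1 \<in> {1..N}"
  using N by simp

lemma indices_nonempty: "{1..N} \<noteq> {}"
  using N by simp

lemma continuous_h: "continuous_on UNIV h"
  using h_strictly_convex
  by (intro convex_on_continuous convex_on_if_strictly_convex_on) auto

lemma continuous_cost: "continuous_on UNIV (cost i)"
  unfolding cost_def[abs_def]
  by (intro continuous_on_compose2[OF continuous_h]) (auto intro!: continuous_intros)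

lemma borel_measurable_cost [measurable]: "cost i \<in> borel_measurable Q"
  using borel_measurable_continuous_onI[OF continuous_cost]
  by (simp add: measurable_cong_sets[OF sets_Q refl])

lemma borel_measurable_transport_cost: "(\<lambda>uy. h (fst uy - snd uy)) \<in> borel_measurable borel"
  by (intro borel_measurable_continuous_onI continuous_on_compose2[OF continuous_h])
    (auto intro!: continuous_intros)

lemma integrable_cost: "i \<in> {1..N} \<Longrightarrow> integrable Q (cost i)"
  using integrable_h unfolding cost_def[abs_def] by auto

lemma cost_nonneg: "cost i y \<ge> 0"
  using h_nonneg by (simp add: cost_def)

lemma cost_difference_decreasing:
  assumes "i \<in> {1..N}" "j \<in> {1..N}" "i \<noteq> j" "s > 0"
  shows "cost i (y + s *\<^sub>R (x i - x j)) - cost j (y + s *\<^sub>R (x i - x j)) < cost i y - cost j y"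
proof -
  have "x j - x i \<noteq> 0"
    using distinct assms by (auto dest: inj_onD)
  from strictly_convex_on_secant_sum[OF h_strictly_convex this \<open>s > 0\<close>, of "x i - y"]
  show ?thesis
    unfolding cost_def by (simp add: algebra_simps)
qed

lemma null_sets_ties: "ties z \<in> null_sets Q"
  unfolding ties_def
proof (intro null_sets.finite_UN ballI)
  fix i j assume "i \<in> {1..N}" "j \<in> {1..N} - {i}"
  then have "{y. cost i y - cost j y = z i - z j} \<in> null_sets lborel"
    by (intro level_set_null_if_strictly_decreasing[where u = "x i - x j"] cost_difference_decreasing)
      (auto dest: inj_onD[OF distinct])
  moreover have "{y. cost i y - cost j y = z i - z j} = {y. cost i y - z i = cost j y - z j}"
    by auto
  ultimately show "{y. cost i y - z i = cost j y - z j} \<in> null_sets Q"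
    using Q_ac unfolding absolutely_continuous_def by auto
qed auto

lemma AE_not_in_ties: "AE y in Q. y \<notin> ties z"
  using null_sets_ties by (rule AE_not_in)

lemma lower_env_le: "finite K \<Longrightarrow> k \<in> K \<Longrightarrow> lower_env K z y \<le> cost k y - z k"
  unfolding lower_env_def by (rule Min_le) auto

lemma lower_env_greatest:
  "finite K \<Longrightarrow> K \<noteq> {} \<Longrightarrow> (\<And>k. k \<in> K \<Longrightarrow> v \<le> cost k y - z k) \<Longrightarrow> v \<le> lower_env K z y"
  unfolding lower_env_def by (subst Min_ge_iff) auto

lemma lower_env_attained:
  assumes "finite K" "K \<noteq> {}"
  obtains k where "k \<in> K" "lower_env K z y = cost k y - z k"
proof -
  have "lower_env K z y \<in> (\<lambda>k. cost k y - z k) ` K"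
    unfolding lower_env_def using assms by (intro Min_in) auto
  then show ?thesis using that by blast
qed

lemma lower_env_shift_le:
  assumes "finite K" "K \<noteq> {}" "\<And>k. k \<in> K \<Longrightarrow> w k \<le> z k + t"
  shows "lower_env K z y - t \<le> lower_env K w y"
proof (rule lower_env_greatest[OF assms(1,2)])
  fix k assume "k \<in> K"
  then show "lower_env K z y - t \<le> cost k y - w k"
    using lower_env_le[OF assms(1) \<open>k \<in> K\<close>, of z y] assms(3)[OF \<open>k \<in> K\<close>] by linarith
qed

lemma lower_env_shift:
  assumes "finite K" "K \<noteq> {}" "\<And>k. k \<in> K \<Longrightarrow> w k = z k + t"
  shows "lower_env K w y = lower_env K z y - t"
  using lower_env_shift_le[OF assms(1,2), of w z t y] lower_env_shift_le[OF assms(1,2), of z w "- t" y]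
    assms(3) by force

lemma continuous_lower_env: "finite K \<Longrightarrow> K \<noteq> {} \<Longrightarrow> continuous_on UNIV (lower_env K z)"
  unfolding lower_env_def[abs_def]
  by (rule continuous_on_Min_finite[where f = "\<lambda>k y. cost k y - z k"])
    (auto intro!: continuous_intros continuous_cost)

lemma borel_measurable_lower_env [measurable]: "finite K \<Longrightarrow> lower_env K z \<in> borel_measurable Q"
  unfolding lower_env_def[abs_def] by measurable

lemma integrable_lower_env: "integrable Q (lower_env {1..N} z)"
proof (rule Bochner_Integration.integrable_bound)
  show "integrable Q (\<lambda>y. (\<Sum>i\<in>{1..N}. cost i y) + (\<Sum>i\<in>{1..N}. \<bar>z i\<bar>))"
    using integrable_cost by (intro Bochner_Integration.integrable_add integrable_sum) auto
  show "AE y in Q. norm (lower_env {1..N} z y) \<le> norm ((\<Sum>i\<in>{1..N}. cost i y) + (\<Sum>i\<in>{1..N}. \<bar>z i\<bar>))"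
  proof (intro AE_I2)
    fix y
    obtain i where i: "i \<in> {1..N}" "lower_env {1..N} z y = cost i y - z i"
      using lower_env_attained[OF _ indices_nonempty] by blast
    have "cost i y \<le> (\<Sum>i\<in>{1..N}. cost i y)" "\<bar>z i\<bar> \<le> (\<Sum>i\<in>{1..N}. \<bar>z i\<bar>)"
      using i(1) cost_nonneg by (auto intro: member_le_sum)
    then show "norm (lower_env {1..N} z y) \<le> norm ((\<Sum>i\<in>{1..N}. cost i y) + (\<Sum>i\<in>{1..N}. \<bar>z i\<bar>))"
      using i(2) cost_nonneg[of i y] by (auto simp: sum_nonneg)
  qed
qed measurable

lemma dual_eq: "dual z = (\<Sum>i\<in>{1..N}. z i * p i) + (\<integral>y. lower_env {1..N} z y \<partial>Q)"
  unfolding g_dual_def lower_env_def cost_def ..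

lemma dual_cong:
  assumes "\<And>k. k \<in> {1..N} \<Longrightarrow> z k = w k"
  shows "dual z = dual w"
proof -
  have "lower_env {1..N} z = lower_env {1..N} w"
    using lower_env_shift[OF _ indices_nonempty, of z w 0] assms by fastforce
  then show ?thesis
    unfolding dual_eq using assms by simp
qed

lemma dual_shift: "dual (\<lambda>k. z k + t) = dual z"
proof -
  have "(\<Sum>i\<in>{1..N}. (z i + t) * p i) = (\<Sum>i\<in>{1..N}. z i * p i) + t"
    using p_sum by (simp add: algebra_simps sum.distrib sum_distrib_left[symmetric])
  moreover have "(\<integral>y. lower_env {1..N} (\<lambda>k. z k + t) y \<partial>Q) = (\<integral>y. lower_env {1..N} z y \<partial>Q) - t"
    using integrable_lower_env indices_nonempty by (simp add: lower_env_shift)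
  ultimately show ?thesis
    unfolding dual_eq by simp
qed

lemma p_le_one: "i \<in> {1..N} \<Longrightarrow> p i \<le> 1"
  using p_sum member_le_sum[of i "{1..N}" p] p_pos by (simp add: less_imp_le)

lemma dual_Lipschitz: "\<bar>dual z - dual w\<bar> \<le> 2 * (\<Sum>i\<in>{1..N}. \<bar>z i - w i\<bar>)"
proof -
  let ?D = "\<Sum>i\<in>{1..N}. \<bar>z i - w i\<bar>"
  have "\<bar>lower_env {1..N} z y - lower_env {1..N} w y\<bar> \<le> ?D" for y
    using lower_env_shift_le[OF _ indices_nonempty, of z w ?D y]
      lower_env_shift_le[OF _ indices_nonempty, of w z ?D y]
      member_le_sum[of _ "{1..N}" "\<lambda>i. \<bar>z i - w i\<bar>"]
    by (fastforce simp: abs_le_iff)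
  then have "\<bar>\<integral>y. lower_env {1..N} z y - lower_env {1..N} w y \<partial>Q\<bar> \<le> (\<integral>y. ?D \<partial>Q)"
    using integrable_lower_env
    by (intro order_trans[OF integral_abs_bound] integral_mono) auto
  moreover have "\<bar>(\<Sum>i\<in>{1..N}. z i * p i) - (\<Sum>i\<in>{1..N}. w i * p i)\<bar> \<le> ?D"
  proof -
    have "\<bar>(\<Sum>i\<in>{1..N}. z i * p i) - (\<Sum>i\<in>{1..N}. w i * p i)\<bar> \<le> (\<Sum>i\<in>{1..N}. \<bar>(z i - w i) * p i\<bar>)"
      by (simp add: sum_subtractf[symmetric] left_diff_distrib[symmetric] sum_abs)
    also have "\<dots> \<le> ?D"
      using p_pos p_le_one by (intro sum_mono) (simp add: abs_mult mult_left_le less_imp_le)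
    finally show ?thesis .
  qed
  moreover have "dual z - dual w = ((\<Sum>i\<in>{1..N}. z i * p i) - (\<Sum>i\<in>{1..N}. w i * p i))
      + (\<integral>y. lower_env {1..N} z y - lower_env {1..N} w y \<partial>Q)"
    unfolding dual_eq using integrable_lower_env by simp
  moreover have "(\<integral>y. ?D \<partial>Q) = ?D"
    by simp
  ultimately show ?thesis
    by linarith
qed

lemma continuous_dual: "continuous_map (product_topology (\<lambda>_. euclideanreal) {1..N}) euclideanreal dual"
  by (rule continuous_map_product_topology_if_Lipschitz[OF _ dual_Lipschitz]) simp

lemma dual_zero_nonneg: "0 \<le> dual (\<lambda>_. 0)"
proof -
  have "0 \<le> lower_env {1..N} (\<lambda>_. 0) y" for y
    using N by (intro lower_env_greatest) (auto simp: cost_nonneg)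
  then show ?thesis
    unfolding dual_eq by (simp add: Bochner_Integration.integral_nonneg)
qed

lemma sets_cell [measurable]: "cell i z \<in> sets Q"
  unfolding cell_def by measurable

lemma sets_weak_cell [measurable]: "weak_cell i z \<in> sets Q"
  unfolding weak_cell_def by measurable

lemma cell_subset_weak_cell: "cell i z \<subseteq> weak_cell i z"
  unfolding cell_def weak_cell_def by (auto intro: less_imp_le)

lemma weak_cell_subset:
  assumes "i \<in> {1..N}"
  shows "weak_cell i z \<subseteq> cell i z \<union> ties z"
proof
  fix y assume y: "y \<in> weak_cell i z"
  show "y \<in> cell i z \<union> ties z"
  proof (cases "y \<in> cell i z")
    case False
    then obtain j where j: "j \<in> {1..N}" "j \<noteq> i" "cost j y - z j \<le> cost i y - z i"
      unfolding cell_def by (auto simp: not_less)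
    with y have "cost i y - z i = cost j y - z j"
      unfolding weak_cell_def by (auto intro: order_antisym)
    with assms j have "y \<in> ties z"
      unfolding ties_def by (intro UN_I[of i] UN_I[of j]) auto
    then show ?thesis by simp
  qed simp
qed

lemma disjoint_cells: "disjoint_family_on (\<lambda>i. cell i z) {1..N}"
proof (unfold disjoint_family_on_def, intro ballI impI)
  fix m n assume "m \<in> {1..N}" "n \<in> {1..N}" "m \<noteq> n"
  show "cell m z \<inter> cell n z = {}"
  proof (intro equalityI subsetI)
    fix y assume "y \<in> cell m z \<inter> cell n z"
    with \<open>m \<in> {1..N}\<close> \<open>n \<in> {1..N}\<close> \<open>m \<noteq> n\<close>
    have "cost m y - z m < cost n y - z n" "cost n y - z n < cost m y - z m"
      unfolding cell_def by auto
    then show "y \<in> {}" by simp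
  qed simp
qed

lemma cell_unique: "i \<in> {1..N} \<Longrightarrow> k \<in> {1..N} \<Longrightarrow> y \<in> cell i z \<Longrightarrow> y \<in> cell k z \<Longrightarrow> k = i"
  using disjoint_cells[of z] unfolding disjoint_family_on_def by blast

lemma in_cell_if_not_in_ties:
  assumes "y \<notin> ties z"
  obtains i where "i \<in> {1..N}" "y \<in> cell i z"
proof -
  obtain i where i: "i \<in> {1..N}" "lower_env {1..N} z y = cost i y - z i"
    using lower_env_attained[OF _ indices_nonempty] by blast
  have "cost i y - z i < cost j y - z j" if "j \<in> {1..N}" "j \<noteq> i" for j
  proof -
    have "cost i y - z i \<le> cost j y - z j"
      using lower_env_le[of "{1..N}" j z y] that(1) i(2) by simp
    moreover have "cost i y - z i \<noteq> cost j y - z j"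
      using assms that i(1) unfolding ties_def by auto
    ultimately show ?thesis by simp
  qed
  with i(1) show thesis
    using that by (auto simp: cell_def)
qed

lemma lower_env_on_cell:
  assumes "i \<in> {1..N}" "y \<in> cell i z"
  shows "lower_env {1..N} z y = cost i y - z i"
proof (rule antisym)
  show "lower_env {1..N} z y \<le> cost i y - z i"
    using assms(1) by (intro lower_env_le) auto
  show "cost i y - z i \<le> lower_env {1..N} z y"
  proof (rule lower_env_greatest[OF _ indices_nonempty])
    fix k assume "k \<in> {1..N}"
    with assms(2) show "cost i y - z i \<le> cost k y - z k"
      unfolding cell_def by (cases "k = i") (auto intro: less_imp_le)
  qed simp
qed

lemma measure_weak_cell:
  assumes "i \<in> {1..N}"
  shows "measure Q (weak_cell i z) = measure Q (cell i z)"
proof -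
  have "AE y in Q. y \<in> weak_cell i z \<longleftrightarrow> y \<in> cell i z"
    using AE_not_in_ties[of z]
    by eventually_elim (use weak_cell_subset[OF assms] cell_subset_weak_cell in blast)
  then show ?thesis
    by (intro measure_eq_AE) auto
qed

lemma AE_in_cells: "AE y in Q. \<exists>i\<in>{1..N}. y \<in> cell i z"
  using AE_not_in_ties[of z] by (rule eventually_mono) (metis in_cell_if_not_in_ties)

lemma sum_measure_cells: "(\<Sum>i\<in>{1..N}. measure Q (cell i z)) = 1"
proof -
  have "(\<Sum>i\<in>{1..N}. measure Q (cell i z)) = measure Q (\<Union>i\<in>{1..N}. cell i z)"
    using disjoint_cells by (intro measure_finite_Union[symmetric]) auto
  also have "\<dots> = 1"
    using AE_in_cells[of z] by (subst Q.AE_in_set_eq_1[symmetric]) auto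
  finally show ?thesis .
qed

subsection \<open>Maximisers of the dual\<close>

lemma lower_env_increment_ge:
  assumes "i \<in> {1..N}" "e > 0"
  shows "lower_env {1..N} z y - e * indicator (cell i (z(i := z i + e))) y
    \<le> lower_env {1..N} (z(i := z i + e)) y"
proof (cases "y \<in> cell i (z(i := z i + e))")
  case True
  have "lower_env {1..N} z y - e \<le> lower_env {1..N} (z(i := z i + e)) y"
    using \<open>e > 0\<close> by (intro lower_env_shift_le[OF _ indices_nonempty]) auto
  with True show ?thesis by simp
next
  case False
  then obtain j where j: "j \<in> {1..N}" "j \<noteq> i" "cost j y - z j \<le> cost i y - (z i + e)"
    unfolding cell_def by (auto simp: not_less)
  have "lower_env {1..N} z y \<le> lower_env {1..N} (z(i := z i + e)) y"
  proof (rule lower_env_greatest[OF _ indices_nonempty])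
    fix k assume k: "k \<in> {1..N}"
    show "lower_env {1..N} z y \<le> cost k y - (z(i := z i + e)) k"
      using lower_env_le[OF _ k, of z y] lower_env_le[OF _ j(1), of z y] j by (cases "k = i") auto
  qed simp
  with False show ?thesis by simp
qed

lemma dual_increment_ge:
  assumes i: "i \<in> {1..N}" and "e > 0"
  shows "e * (p i - measure Q (cell i (z(i := z i + e)))) \<le> dual (z(i := z i + e)) - dual z"
proof -
  let ?z' = "z(i := z i + e)"
  have "(\<Sum>k\<in>{1..N}. ?z' k * p k) = (\<Sum>k\<in>{1..N}. z k * p k + (if k = i then e * p i else 0))"
    by (intro sum.cong) (auto simp: algebra_simps)
  also have "\<dots> = (\<Sum>k\<in>{1..N}. z k * p k) + e * p i"
    using i by (simp add: sum.distrib)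
  finally have "dual ?z' - dual z = e * p i + (\<integral>y. lower_env {1..N} ?z' y - lower_env {1..N} z y \<partial>Q)"
    unfolding dual_eq using integrable_lower_env by simp
  moreover have "(\<integral>y. - e * indicator (cell i ?z') y \<partial>Q)
      \<le> (\<integral>y. lower_env {1..N} ?z' y - lower_env {1..N} z y \<partial>Q)"
    using lower_env_increment_ge[OF assms] integrable_lower_env
    by (intro integral_mono integrable_mult_right integrable_real_indicator)
      (auto simp: less_top[symmetric] algebra_simps)
  ultimately show ?thesis
    by (simp add: algebra_simps)
qed

lemma cell_increment:
  "cell i (z(i := z i + e)) = {y. \<forall>j\<in>{1..N}. j \<noteq> i \<longrightarrow> cost i y - z i - e < cost j y - z j}"
  unfolding cell_def by auto

lemma weak_cell_eq_Inter_cells: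
  "weak_cell i z = (\<Inter>n. cell i (z(i := z i + inverse (real (Suc n)))))"
  unfolding cell_increment weak_cell_def
proof (intro equalityI subsetI)
  fix y assume y: "y \<in> {y. \<forall>j\<in>{1..N}. j \<noteq> i \<longrightarrow> cost i y - z i \<le> cost j y - z j}"
  show "y \<in> (\<Inter>n. {y. \<forall>j\<in>{1..N}. j \<noteq> i \<longrightarrow> cost i y - z i - inverse (real (Suc n)) < cost j y - z j})"
  proof (intro INT_I CollectI ballI impI)
    fix n j assume "j \<in> {1..N}" "j \<noteq> i"
    with y have "cost i y - z i \<le> cost j y - z j"
      by blast
    moreover have "0 < inverse (real (Suc n))"
      by simp
    ultimately show "cost i y - z i - inverse (real (Suc n)) < cost j y - z j"
      by linarith
  qed
next
  fix y assume y: "y \<in> (\<Inter>n. {y. \<forall>j\<in>{1..N}. j \<noteq> i \<longrightarrow> cost i y - z i - inverse (real (Suc n)) < cost j y - z j})"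
  show "y \<in> {y. \<forall>j\<in>{1..N}. j \<noteq> i \<longrightarrow> cost i y - z i \<le> cost j y - z j}"
  proof (intro CollectI ballI impI)
    fix j assume "j \<in> {1..N}" "j \<noteq> i"
    show "cost i y - z i \<le> cost j y - z j"
    proof (rule ccontr)
      assume "\<not> ?thesis"
      then obtain n where "inverse (real (Suc n)) < (cost i y - z i) - (cost j y - z j)"
        using reals_Archimedean[of "(cost i y - z i) - (cost j y - z j)"] by auto
      moreover have "cost i y - z i - inverse (real (Suc n)) < cost j y - z j"
        using y \<open>j \<in> {1..N}\<close> \<open>j \<noteq> i\<close> by blast
      ultimately show False
        by linarith
    qed
  qed
qed

lemma decseq_cells_increment: "decseq (\<lambda>n. cell i (z(i := z i + inverse (real (Suc n)))))"
  unfolding cell_increment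
proof (intro decseq_SucI subsetI CollectI ballI impI)
  fix n y j
  assume y: "y \<in> {y. \<forall>j\<in>{1..N}. j \<noteq> i \<longrightarrow> cost i y - z i - inverse (real (Suc (Suc n))) < cost j y - z j}"
    and "j \<in> {1..N}" "j \<noteq> i"
  then have "cost i y - z i - inverse (real (Suc (Suc n))) < cost j y - z j"
    by blast
  moreover have "inverse (real (Suc (Suc n))) \<le> inverse (real (Suc n))"
    by (simp add: field_simps)
  ultimately show "cost i y - z i - inverse (real (Suc n)) < cost j y - z j"
    by linarith
qed

lemma measure_weak_cell_ge_if_maximal:
  assumes max: "\<And>w. dual w \<le> dual z" and i: "i \<in> {1..N}"
  shows "p i \<le> measure Q (weak_cell i z)"
proof -
  define e where "e n = inverse (real (Suc n))" for n
  have "p i \<le> measure Q (cell i (z(i := z i + e n)))" for n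
  proof -
    have "e n > 0"
      by (simp add: e_def)
    moreover have "e n * (p i - measure Q (cell i (z(i := z i + e n)))) \<le> 0"
      using dual_increment_ge[OF i \<open>e n > 0\<close>, of z] max[of "z(i := z i + e n)"] by linarith
    ultimately show ?thesis
      by (simp add: mult_le_0_iff)
  qed
  moreover have "(\<lambda>n. measure Q (cell i (z(i := z i + e n)))) \<longlonglongrightarrow> measure Q (weak_cell i z)"
    unfolding e_def weak_cell_eq_Inter_cells
    using decseq_cells_increment by (intro Q.finite_Lim_measure_decseq) auto
  ultimately show ?thesis
    by (intro LIMSEQ_le_const) auto
qed

lemma balanced_if_maximal:
  assumes "\<And>w. dual w \<le> dual z"
  shows "balanced z"
proof -
  have ge: "p i \<le> measure Q (cell i z)" if "i \<in> {1..N}" for i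
    using measure_weak_cell_ge_if_maximal[OF assms that] measure_weak_cell[OF that] by simp
  have "(\<Sum>i\<in>{1..N}. measure Q (cell i z) - p i) = 0"
    using sum_measure_cells p_sum by (simp add: sum_subtractf)
  then have "\<forall>i\<in>{1..N}. measure Q (cell i z) - p i = 0"
    using ge by (subst sum_nonneg_eq_0_iff[symmetric]) auto
  then show ?thesis
    unfolding balanced_def by simp
qed

lemma dual_le_deviation:
  assumes i: "i \<in> {1..N}"
  shows "dual w \<le> (\<Sum>k\<in>{1..N}. \<integral>y. cost k y \<partial>Q) - Min (p ` {1..N}) * \<bar>w i - w 1\<bar>"
proof -
  have "Max (w ` {1..N}) \<in> w ` {1..N}" "Min (w ` {1..N}) \<in> w ` {1..N}"
    using indices_nonempty by (auto intro: Max_in Min_in)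
  then obtain a m where a: "a \<in> {1..N}" "Max (w ` {1..N}) = w a"
    and m: "m \<in> {1..N}" "Min (w ` {1..N}) = w m"
    by blast
  then have range: "w m \<le> w k" "w k \<le> w a" if "k \<in> {1..N}" for k
    using that by (simp_all flip: a(2) m(2))
  have "(\<integral>y. lower_env {1..N} w y \<partial>Q) \<le> (\<integral>y. cost a y - w a \<partial>Q)"
    using integrable_lower_env integrable_cost[OF a(1)] a(1)
    by (intro integral_mono lower_env_le) auto
  also have "\<dots> = (\<integral>y. cost a y \<partial>Q) - w a"
    using integrable_cost[OF a(1)] by simp
  also have "(\<integral>y. cost a y \<partial>Q) \<le> (\<Sum>k\<in>{1..N}. \<integral>y. cost k y \<partial>Q)"
    using a(1) cost_nonneg by (intro member_le_sum Bochner_Integration.integral_nonneg) auto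
  finally have integral: "(\<integral>y. lower_env {1..N} w y \<partial>Q) \<le> (\<Sum>k\<in>{1..N}. \<integral>y. cost k y \<partial>Q) - w a"
    by simp
  have "(\<Sum>k\<in>{1..N}. w k * p k) - w a = (\<Sum>k\<in>{1..N}. (w k - w a) * p k)"
    using p_sum by (simp add: left_diff_distrib sum_subtractf sum_distrib_left[symmetric])
  also have "\<dots> = (w m - w a) * p m + (\<Sum>k\<in>{1..N} - {m}. (w k - w a) * p k)"
    using m by (simp add: sum.remove)
  also have "\<dots> \<le> (w m - w a) * p m"
    using range p_pos by (auto intro!: sum_nonpos simp: mult_nonpos_nonneg less_imp_le)
  also have "\<dots> \<le> (w m - w a) * Min (p ` {1..N})"
    using range m by (intro mult_left_mono_neg Min_le) auto
  also have "\<dots> \<le> - \<bar>w i - w 1\<bar> * Min (p ` {1..N})"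
    using range[OF i] range[OF one_in_indices] p_pos indices_nonempty
    by (intro mult_right_mono) (auto simp: less_imp_le)
  finally show ?thesis
    using integral unfolding dual_eq by (simp add: algebra_simps)
qed

lemma dual_normalize: "dual w = dual (restrict (\<lambda>k. w k - w 1) {1..N})"
  using dual_shift[of w "- w 1"] dual_cong[of "restrict (\<lambda>k. w k - w 1) {1..N}" "\<lambda>k. w k + - w 1"]
  by simp

(* By shift invariance it suffices to maximise over w 1 = 0; outside a large box,
   dual_le_deviation pushes the dual below its value at 0. *)
lemma dual_attains_max:
  obtains z where "z \<in> extensional {1..N}" "z 1 = 0" "\<And>w. dual w \<le> dual z"
proof -
  define C where "C = (\<Sum>k\<in>{1..N}. \<integral>y. cost k y \<partial>Q)"
  define p_min where "p_min = Min (p ` {1..N})"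
  have p_min: "p_min > 0"
    using p_pos indices_nonempty by (simp add: p_min_def)
  define z0 where "z0 = restrict (\<lambda>_. 0 :: real) {1..N}"
  define R where "R = \<bar>C - dual z0\<bar> / p_min + 1"
  have "p_min * R = \<bar>C - dual z0\<bar> + p_min"
    using p_min by (simp add: R_def field_simps)
  then have R: "R > 0" "C - p_min * R < dual z0"
    using p_min by (auto simp: R_def add_nonneg_pos)
  define B where "B = (\<Pi>\<^sub>E i\<in>{1..N}. if i = 1 then {0} else {-R..R})"
  have "compactin (product_topology (\<lambda>_. euclideanreal) {1..N}) B"
    unfolding B_def by (subst compactin_PiE) auto
  then have "compact (dual ` B)"
    using image_compactin[OF _ continuous_dual] by simp
  moreover have "z0 \<in> B"
    using R by (auto simp: B_def z0_def)
  ultimately obtain zs where zs: "zs \<in> B" "\<And>w. w \<in> B \<Longrightarrow> dual w \<le> dual zs"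
    using compact_attains_sup[of "dual ` B"] by blast
  have "dual w \<le> dual zs" for w
  proof (cases "restrict (\<lambda>k. w k - w 1) {1..N} \<in> B")
    case True
    then show ?thesis
      using zs(2) dual_normalize[of w] by simp
  next
    case False
    then obtain i where "i \<in> {1..N}" "R < \<bar>w i - w 1\<bar>"
      by (auto simp: B_def PiE_iff abs_le_iff not_less split: if_splits)
    then have "dual w \<le> C - p_min * R"
      using dual_le_deviation[of i w, folded C_def p_min_def] p_min by (smt (verit) mult_left_mono)
    also have "\<dots> < dual zs"
      using R(2) zs(2)[OF \<open>z0 \<in> B\<close>] by simp
    finally show ?thesis
      by simp
  qed
  moreover have "zs \<in> extensional {1..N}" "zs 1 = 0"
    using zs(1) PiE_mem[OF zs(1)[unfolded B_def] one_in_indices] by (auto simp: B_def PiE_iff)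
  ultimately show thesis
    using that by blast
qed

subsection \<open>Duality\<close>

abbreviation P :: "'a measure" where
  "P \<equiv> discrete_measure N x p"

definition potential :: "(nat \<Rightarrow> real) \<Rightarrow> 'a \<Rightarrow> real" where
  "potential z u = (\<Sum>k\<in>{1..N}. z k * indicator {x k} u)"

definition transport_map :: "(nat \<Rightarrow> real) \<Rightarrow> 'a \<Rightarrow> 'a" where
  "transport_map z y = (\<Sum>k\<in>{1..N}. indicator (cell k z) y *\<^sub>R x k)"

lemma potential_at_point:
  assumes "i \<in> {1..N}"
  shows "potential z (x i) = z i"
proof -
  have "potential z (x i) = (\<Sum>k\<in>{1..N}. if k = i then z k else 0)"
    unfolding potential_def using assms distinct
    by (intro sum.cong) (auto simp: indicator_def dest: inj_onD)
  also have "\<dots> = z i"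
    using assms by simp
  finally show ?thesis .
qed

lemma emeasure_P_singleton: "k \<in> {1..N} \<Longrightarrow> emeasure P {x k} = p k"
  using distinct
  by (simp add: emeasure_discrete_measure inj_on_eq_iff if_distrib sum.delta cong: if_cong)

lemma sets_points: "x ` {1..N} \<in> sets borel"
  by (intro borel_closed finite_imp_closed) auto

lemma emeasure_P_outside: "emeasure P (- x ` {1..N}) = 0"
  by (subst emeasure_discrete_measure[OF borel_comp[OF sets_points]]) auto

lemma borel_measurable_potential [measurable]: "potential z \<in> borel_measurable borel"
  unfolding potential_def[abs_def] by measurable

lemma integrable_potential: "integrable P (potential z)"
  and integral_potential: "(\<integral>u. potential z u \<partial>P) = (\<Sum>k\<in>{1..N}. z k * p k)"
proof -
  have finite: "emeasure P {x k} < \<infinity>" if "k \<in> {1..N}" for k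
    using emeasure_P_singleton[OF that] by simp
  show "integrable P (potential z)"
    unfolding potential_def[abs_def] using finite
    by (intro Bochner_Integration.integrable_sum integrable_mult_right integrable_real_indicator) auto
  have "(\<integral>u. potential z u \<partial>P) = (\<Sum>k\<in>{1..N}. z k * measure P {x k})"
    unfolding potential_def[abs_def] using finite
    by (subst Bochner_Integration.integral_sum) (auto intro: integrable_mult_right integrable_real_indicator)
  also have "\<dots> = (\<Sum>k\<in>{1..N}. z k * p k)"
    using emeasure_P_singleton p_pos by (intro sum.cong refl) (simp add: measure_def less_imp_le)
  finally show "(\<integral>u. potential z u \<partial>P) = (\<Sum>k\<in>{1..N}. z k * p k)" .
qed

lemma dual_le_coupling_cost:
  assumes \<pi>: "\<pi> \<in> couplings P Q"
  shows "ennreal (dual z) \<le> (\<integral>\<^sup>+ uy. ennreal (h (fst uy - snd uy)) \<partial>\<pi>)"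
proof (cases "(\<integral>\<^sup>+ uy. ennreal (h (fst uy - snd uy)) \<partial>\<pi>) = \<infinity>")
  case False
  let ?c = "\<lambda>uy. h (fst uy - snd uy)"
  have "sets \<pi> = sets borel"
    using \<pi> by (simp add: couplings_def)
  then have integrable_c: "integrable \<pi> ?c"
    using False h_nonneg borel_measurable_transport_cost
    by (intro integrableI_nonneg)
      (auto simp: less_top measurable_cong_sets[OF \<open>sets \<pi> = sets borel\<close> refl])
  note coupling = integral_couplings[OF \<pi> sets_discrete_measure sets_Q integrable_potential integrable_lower_env]
  have "AE uy in \<pi>. potential z (fst uy) + lower_env {1..N} z (snd uy) \<le> ?c uy"
    using AE_fst_in_couplings[OF \<pi> sets_points emeasure_P_outside]
  proof (rule eventually_mono)
    fix uy :: "'a \<times> 'a" assume "fst uy \<in> x ` {1..N}"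
    then obtain i where "i \<in> {1..N}" "fst uy = x i" by auto
    then show "potential z (fst uy) + lower_env {1..N} z (snd uy) \<le> ?c uy"
      using lower_env_le[of "{1..N}" i z "snd uy"] potential_at_point by (simp add: cost_def)
  qed
  then have "(\<integral>uy. potential z (fst uy) + lower_env {1..N} z (snd uy) \<partial>\<pi>) \<le> (\<integral>uy. ?c uy \<partial>\<pi>)"
    using coupling(1) integrable_c by (intro integral_mono_AE)
  then have "dual z \<le> (\<integral>uy. ?c uy \<partial>\<pi>)"
    unfolding coupling(2) integral_potential dual_eq .
  also have "ennreal \<dots> = (\<integral>\<^sup>+ uy. ennreal (?c uy) \<partial>\<pi>)"
    using integrable_c h_nonneg by (intro nn_integral_eq_integral[symmetric]) auto
  finally show ?thesis
    by (simp add: ennreal_leI)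
qed simp

lemma dual_le_OT_cost: "ennreal (dual z) \<le> OT_cost (\<lambda>u v. h (u - v)) P Q"
  unfolding OT_cost_def by (intro INF_greatest dual_le_coupling_cost)

lemma transport_map_on_cell:
  assumes "i \<in> {1..N}" "y \<in> cell i z"
  shows "transport_map z y = x i"
proof -
  have "y \<in> cell k z \<longleftrightarrow> k = i" if "k \<in> {1..N}" for k
    using assms that cell_unique by blast
  then have "transport_map z y = (\<Sum>k\<in>{1..N}. if k = i then x k else 0)"
    unfolding transport_map_def by (intro sum.cong) (auto simp: indicator_def)
  also have "\<dots> = x i"
    using assms(1) by simp
  finally show ?thesis .
qed

lemma borel_measurable_transport_map [measurable]: "transport_map z \<in> borel_measurable Q"
  unfolding transport_map_def[abs_def] by measurable

lemma distr_transport_map: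
  assumes "balanced z"
  shows "distr Q borel (transport_map z) = P"
proof (rule measure_eqI)
  fix A assume "A \<in> sets (distr Q borel (transport_map z))"
  then have A: "A \<in> sets borel" by simp
  let ?I = "{k\<in>{1..N}. x k \<in> A}"
  have preimage: "AE y in Q. y \<in> transport_map z -` A \<longleftrightarrow> y \<in> (\<Union>k\<in>?I. cell k z)"
    using AE_in_cells[of z]
  proof (rule eventually_mono)
    fix y assume "\<exists>i\<in>{1..N}. y \<in> cell i z"
    then obtain i where i: "i \<in> {1..N}" "y \<in> cell i z" by blast
    have "y \<in> (\<Union>k\<in>?I. cell k z) \<longleftrightarrow> x i \<in> A"
      using i cell_unique[OF i(1) _ i(2)] by blast
    then show "y \<in> transport_map z -` A \<longleftrightarrow> y \<in> (\<Union>k\<in>?I. cell k z)"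
      using transport_map_on_cell[OF i] by simp
  qed
  have "emeasure (distr Q borel (transport_map z)) A = emeasure Q (transport_map z -` A)"
    using A by (simp add: emeasure_distr)
  also have "\<dots> = emeasure Q (\<Union>k\<in>?I. cell k z)"
    using preimage measurable_sets[OF borel_measurable_transport_map A]
    by (intro emeasure_eq_AE) auto
  also have "\<dots> = (\<Sum>k\<in>?I. emeasure Q (cell k z))"
    using disjoint_cells[of z] by (intro sum_emeasure[symmetric]) (auto simp: disjoint_family_on_def)
  also have "\<dots> = (\<Sum>k\<in>?I. ennreal (p k))"
    using assms by (intro sum.cong refl) (simp add: balanced_def Q.emeasure_eq_measure)
  also have "\<dots> = (\<Sum>k\<in>{1..N}. if x k \<in> A then ennreal (p k) else 0)"
    by (rule sum.inter_filter) simp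
  also have "\<dots> = emeasure P A"
    using emeasure_discrete_measure[OF A] by simp
  finally show "emeasure (distr Q borel (transport_map z)) A = emeasure P A" .
qed simp

lemma cost_transport_map:
  "AE y in Q. h (transport_map z y - y) = lower_env {1..N} z y + potential z (transport_map z y)"
  using AE_in_cells[of z]
proof (rule eventually_mono)
  fix y assume "\<exists>i\<in>{1..N}. y \<in> cell i z"
  then obtain i where i: "i \<in> {1..N}" "y \<in> cell i z" by blast
  then show "h (transport_map z y - y) = lower_env {1..N} z y + potential z (transport_map z y)"
    using transport_map_on_cell[OF i] lower_env_on_cell[OF i] potential_at_point[OF i(1)]
    by (simp add: cost_def)
qed

lemma OT_cost_le_dual_if_balanced:
  assumes "balanced z"
  shows "OT_cost (\<lambda>u v. h (u - v)) P Q \<le> ennreal (dual z)"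
proof -
  let ?T = "transport_map z"
  have coupling: "distr Q borel (\<lambda>y. (?T y, y)) \<in> couplings P Q"
    using distr_transport_map[OF assms] by (intro graph_in_couplings Q.prob_space_axioms sets_Q) auto
  have integrable: "integrable Q (\<lambda>y. potential z (?T y))"
    and integral: "(\<integral>y. potential z (?T y) \<partial>Q) = (\<Sum>k\<in>{1..N}. z k * p k)"
    using integrable_potential[of z] integral_potential[of z] distr_transport_map[OF assms]
      integrable_distr_eq[of ?T Q borel "potential z"] integral_distr[of ?T Q borel "potential z"]
    by simp_all
  have "(\<integral>\<^sup>+ uy. ennreal (h (fst uy - snd uy)) \<partial>distr Q borel (\<lambda>y. (?T y, y)))
      = (\<integral>\<^sup>+ y. ennreal (h (?T y - y)) \<partial>Q)"
    using measurable_graph[OF sets_Q borel_measurable_transport_map] borel_measurable_transport_cost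
    by (simp add: nn_integral_distr)
  also have "\<dots> = (\<integral>\<^sup>+ y. ennreal (lower_env {1..N} z y + potential z (?T y)) \<partial>Q)"
    using cost_transport_map[of z] by (intro nn_integral_cong_AE) (auto elim: eventually_mono)
  also have "\<dots> = ennreal (dual z)"
  proof -
    have "AE y in Q. 0 \<le> lower_env {1..N} z y + potential z (?T y)"
    proof (rule eventually_mono[OF cost_transport_map])
      fix y assume "h (?T y - y) = lower_env {1..N} z y + potential z (?T y)"
      then show "0 \<le> lower_env {1..N} z y + potential z (?T y)"
        using h_nonneg[of "?T y - y"] by linarith
    qed
    then show ?thesis
      using integrable_lower_env integrable integral
      by (subst nn_integral_eq_integral) (auto simp: dual_eq add.commute)
  qed
  finally have "(\<integral>\<^sup>+ uy. ennreal (h (fst uy - snd uy)) \<partial>distr Q borel (\<lambda>y. (?T y, y))) = ennreal (dual z)" .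
  with INF_lower[OF coupling, of "\<lambda>\<pi>. \<integral>\<^sup>+ uy. ennreal (h (fst uy - snd uy)) \<partial>\<pi>"] show ?thesis
    unfolding OT_cost_def by simp
qed

subsection \<open>Uniqueness of balanced weights\<close>

lemma measure_superlevel_zero_or_one:
  fixes F :: "'a \<Rightarrow> real"
  assumes F: "continuous_on UNIV F" and "a < b"
    and gap: "measure Q {y. a < F y \<and> F y < b} = 0"
  shows "measure Q {y. b \<le> F y} = 0 \<or> measure Q {y. b \<le> F y} = 1"
proof -
  let ?S = "measure_support Q"
  have [measurable]: "F \<in> borel_measurable Q"
    using borel_measurable_continuous_onI[OF F] by (simp add: measurable_cong_sets[OF sets_Q refl])
  then have superlevel: "{y. b \<le> F y} \<in> sets Q"
    by measurable
  have "open (F -` {a<..<b})"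
    using F by (intro continuous_open_vimage) (auto simp: continuous_on_eq_continuous_at)
  moreover have "F -` {a<..<b} = {y. a < F y \<and> F y < b}"
    by auto
  ultimately have "{y. a < F y \<and> F y < b} \<inter> ?S = {}"
    using gap by (intro measure_support_disjoint_open_null sets_Q) (auto simp: Q.emeasure_eq_measure)
  then have "F ` ?S \<inter> {a<..<b} = {}"
    by auto
  moreover have "connected (F ` ?S)"
    using connected_support F by (intro connected_continuous_image) (auto intro: continuous_on_subset)
  ultimately have "F ` ?S \<subseteq> {..a} \<or> F ` ?S \<subseteq> {b..}"
    using \<open>a < b\<close> by (intro connected_real_avoiding_interval)
  then show ?thesis
  proof (elim disjE)
    assume below: "F ` ?S \<subseteq> {..a}"
    have "AE y in Q. y \<notin> {y. b \<le> F y}"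
    proof (rule eventually_mono[OF AE_in_measure_support[OF sets_Q]])
      fix y assume "y \<in> ?S"
      with below have "F y \<le> a" by auto
      with \<open>a < b\<close> show "y \<notin> {y. b \<le> F y}" by simp
    qed
    then show ?thesis
      using Q.prob_eq_0[OF superlevel] by blast
  next
    assume above: "F ` ?S \<subseteq> {b..}"
    have "AE y in Q. y \<in> {y. b \<le> F y}"
      by (rule eventually_mono[OF AE_in_measure_support[OF sets_Q]]) (use above in auto)
    then show ?thesis
      using Q.AE_in_set_eq_1[OF superlevel] by blast
  qed
qed

lemma measure_lower_env_le:
  assumes "balanced z" and I: "I \<subseteq> {1..N}" "I \<noteq> {}" and J: "{1..N} - I \<noteq> {}"
  shows "measure Q {y. lower_env I z y \<le> lower_env ({1..N} - I) z y} = (\<Sum>k\<in>I. p k)"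
proof -
  let ?J = "{1..N} - I"
  have fin: "finite I" "finite ?J"
    using I(1) finite_subset by auto
  have "AE y in Q. y \<in> {y. lower_env I z y \<le> lower_env ?J z y} \<longleftrightarrow> y \<in> (\<Union>k\<in>I. cell k z)"
    using AE_in_cells[of z]
  proof (rule eventually_mono)
    fix y assume "\<exists>i\<in>{1..N}. y \<in> cell i z"
    then obtain i where i: "i \<in> {1..N}" "y \<in> cell i z" by blast
    then have less: "cost i y - z i < cost j y - z j" if "j \<in> {1..N}" "j \<noteq> i" for j
      using that unfolding cell_def by blast
    show "y \<in> {y. lower_env I z y \<le> lower_env ?J z y} \<longleftrightarrow> y \<in> (\<Union>k\<in>I. cell k z)"
    proof (cases "i \<in> I")
      case True
      obtain j where j: "j \<in> ?J" "lower_env ?J z y = cost j y - z j"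
        using lower_env_attained[OF fin(2) J] by blast
      have "lower_env I z y \<le> cost i y - z i"
        using fin(1) True by (rule lower_env_le)
      also have "\<dots> < lower_env ?J z y"
        using less[of j] j True by auto
      finally show ?thesis
        using True i(2) by auto
    next
      case False
      obtain k where k: "k \<in> I" "lower_env I z y = cost k y - z k"
        using lower_env_attained[OF fin(1) I(2)] by blast
      have "lower_env ?J z y \<le> cost i y - z i"
        using fin(2) False i(1) by (intro lower_env_le) auto
      also have "\<dots> < lower_env I z y"
        using less[of k] k I(1) False by (auto simp: subset_iff)
      finally show ?thesis
        using False cell_unique[OF i(1) _ i(2)] I(1) by auto
    qed
  qed
  then have "measure Q {y. lower_env I z y \<le> lower_env ?J z y} = measure Q (\<Union>k\<in>I. cell k z)"
    using fin by (intro measure_eq_AE) auto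
  also have "\<dots> = (\<Sum>k\<in>I. measure Q (cell k z))"
    using disjoint_cells[of z] I(1) fin
    by (intro measure_finite_Union) (auto simp: disjoint_family_on_def)
  also have "\<dots> = (\<Sum>k\<in>I. p k)"
    using assms(1) I(1) by (intro sum.cong) (auto simp: balanced_def)
  finally show ?thesis .
qed

lemma sum_p_proper_subset:
  assumes I: "I \<subseteq> {1..N}" "I \<noteq> {}" "{1..N} - I \<noteq> {}"
  shows "0 < (\<Sum>k\<in>I. p k) \<and> (\<Sum>k\<in>I. p k) < 1"
proof -
  have "finite I"
    using I(1) finite_subset by auto
  then have "0 < (\<Sum>k\<in>I. p k)" "0 < (\<Sum>k\<in>{1..N} - I. p k)"
    using I p_pos by (auto intro!: sum_pos)
  moreover have "(\<Sum>k\<in>I. p k) + (\<Sum>k\<in>{1..N} - I. p k) = 1"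
    using p_sum sum.subset_diff[OF I(1) finite_atLeastAtMost, of p] by linarith
  ultimately show ?thesis
    by linarith
qed

(* The open set where M' - M < F < 0 lies between the regions where I wins for z and for w,
   which have equal mass; so it is Q-null, and the connected support sees F on one side of it. *)
lemma balanced_no_uniform_gain:
  assumes z: "balanced z" and w: "balanced w"
    and I: "I \<subseteq> {1..N}" "I \<noteq> {}" "{1..N} - I \<noteq> {}"
    and gain_I: "\<And>k. k \<in> I \<Longrightarrow> w k = z k + M"
    and gain_J: "\<And>k. k \<in> {1..N} - I \<Longrightarrow> w k \<le> z k + M'"
    and "M' < M"
  shows False
proof -
  let ?J = "{1..N} - I"
  have fin: "finite I" "finite ?J"
    using I(1) finite_subset by auto
  define F where "F y = lower_env ?J z y - lower_env I z y" for y
  define Uz where "Uz = {y. 0 \<le> F y}"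
  define Uw where "Uw = {y. lower_env I w y \<le> lower_env ?J w y}"
  have env_I: "lower_env I w y = lower_env I z y - M" for y
    using fin(1) I(2) gain_I by (rule lower_env_shift)
  have env_J: "lower_env ?J z y - M' \<le> lower_env ?J w y" for y
    using fin(2) I(3) gain_J by (rule lower_env_shift_le)
  have "y \<in> Uw" if "M' - M < F y" for y
    using that env_I[of y] env_J[of y] unfolding Uw_def F_def by simp
  then have "{y. M' - M < F y \<and> F y < 0} \<subseteq> Uw - Uz" "Uz \<subseteq> Uw"
    using \<open>M' < M\<close> by (auto simp: Uz_def)
  moreover have measure_U: "measure Q Uz = (\<Sum>k\<in>I. p k)" "measure Q Uw = (\<Sum>k\<in>I. p k)"
    using measure_lower_env_le[OF z I] measure_lower_env_le[OF w I]
    unfolding Uz_def Uw_def F_def by (simp_all add: le_diff_eq)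
  moreover have [measurable]: "Uz \<in> sets Q" "Uw \<in> sets Q"
    unfolding Uz_def Uw_def F_def using fin by measurable
  ultimately have "measure Q {y. M' - M < F y \<and> F y < 0} \<le> 0"
    using Q.finite_measure_mono[of _ "Uw - Uz"] Q.finite_measure_Diff[of Uw Uz] by simp
  then have "measure Q {y. M' - M < F y \<and> F y < 0} = 0"
    using measure_nonneg[of Q "{y. M' - M < F y \<and> F y < 0}"] by linarith
  moreover have "continuous_on UNIV F"
    unfolding F_def[abs_def] using fin I(2,3)
    by (intro continuous_on_diff continuous_lower_env)
  ultimately have "measure Q Uz = 0 \<or> measure Q Uz = 1"
    unfolding Uz_def using \<open>M' < M\<close> measure_superlevel_zero_or_one[of F "M' - M" 0] by simp
  moreover have "0 < (\<Sum>k\<in>I. p k)" "(\<Sum>k\<in>I. p k) < 1"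
    using sum_p_proper_subset[OF I] by auto
  ultimately show False
    using measure_U(1) by linarith
qed

lemma balanced_le:
  assumes z: "balanced z" and w: "balanced w" and "z 1 = w 1" and i0: "i0 \<in> {1..N}"
  shows "w i0 \<le> z i0"
proof (rule ccontr)
  assume "\<not> w i0 \<le> z i0"
  define \<delta> where "\<delta> k = w k - z k" for k
  define M where "M = Max (\<delta> ` {1..N})"
  define I where "I = {k\<in>{1..N}. \<delta> k = M}"
  have M: "\<delta> k \<le> M" if "k \<in> {1..N}" for k
    unfolding M_def using that by simp
  have "M \<in> \<delta> ` {1..N}"
    unfolding M_def using indices_nonempty by (intro Max_in) auto
  then have I: "I \<subseteq> {1..N}" "I \<noteq> {}"
    by (auto simp: I_def)
  have "0 < M"
    using M[OF i0] \<open>\<not> w i0 \<le> z i0\<close> by (simp add: \<delta>_def)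
  then have "1 \<in> {1..N} - I"
    using one_in_indices \<open>z 1 = w 1\<close> by (simp add: I_def \<delta>_def)
  then have J: "{1..N} - I \<noteq> {}"
    by auto
  define M' where "M' = Max (\<delta> ` ({1..N} - I))"
  have "M' \<in> \<delta> ` ({1..N} - I)"
    unfolding M'_def using J by (intro Max_in) auto
  then have "M' < M"
    using M by (fastforce simp: I_def)
  moreover have "w k = z k + M" if "k \<in> I" for k
    using that by (simp add: I_def \<delta>_def)
  moreover have "w k \<le> z k + M'" if "k \<in> {1..N} - I" for k
  proof -
    have "\<delta> k \<le> M'"
      unfolding M'_def using that by (intro Max_ge) auto
    then show ?thesis
      by (simp add: \<delta>_def)
  qed
  ultimately show False
    using balanced_no_uniform_gain[OF z w I J] by blast
qed

lemma balanced_unique: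
  assumes "balanced z" "balanced w" "z 1 = w 1" "z \<in> extensional {1..N}" "w \<in> extensional {1..N}"
  shows "z = w"
proof (rule extensionalityI[OF assms(4,5)])
  fix i assume "i \<in> {1..N}"
  then show "z i = w i"
    using balanced_le[OF assms(1,2,3)] balanced_le[OF assms(2,1) assms(3)[symmetric]]
    by (simp add: order_antisym)
qed

end

theorem lemma6:
  fixes N :: nat and x :: "nat \<Rightarrow> 'a::euclidean_space" and p :: "nat \<Rightarrow> real"
    and Q :: "'a measure" and h :: "'a \<Rightarrow> real"
  assumes N: "N \<ge> 1"
    and distinct: "inj_on x {1..N}"
    and p_pos: "\<forall>k\<in>{1..N}. p k > 0"
    and p_sum: "(\<Sum>k\<in>{1..N}. p k) = 1"
    and Q_prob: "prob_space Q"
    and Q_borel: "sets Q = sets borel"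
    and Q_ac: "absolutely_continuous lborel Q"
    and supp_conn: "connected (measure_support Q)"
    and supp_bdry: "frontier (measure_support Q) \<in> null_sets lborel"
    and h_nonneg: "\<forall>v. h v \<ge> 0"
    and h_diff: "\<forall>v. h differentiable (at v)"
    and A1: "strictly_convex_on UNIV h"
    and A2: "cond_A2 h"
    and A3: "filterlim (\<lambda>v. h v / norm v) at_top at_infinity"
    and integr: "\<forall>i\<in>{1..N}. integrable Q (\<lambda>y. h (x i - y))"
  shows "\<exists>z0. Opt0 (\<lambda>u v. h (u - v)) N x p Q = {z0}"
proof -
  interpret semidiscrete_transport Q N x p h
    using N distinct p_pos p_sum Q_borel Q_ac supp_conn h_nonneg A1 integr
    by (intro semidiscrete_transport.intro semidiscrete_transport_axioms.intro Q_prob) auto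
  obtain zs where zs: "zs \<in> extensional {1..N}" "zs 1 = 0" and max: "\<And>w. dual w \<le> dual zs"
    using dual_attains_max by blast
  have OT: "OT_cost (\<lambda>u v. h (u - v)) P Q = ennreal (dual zs)"
    using OT_cost_le_dual_if_balanced[OF balanced_if_maximal[OF max]] dual_le_OT_cost
    by (rule antisym)
  have "0 \<le> dual zs"
    using dual_zero_nonneg max[of "\<lambda>_. 0"] by linarith
  have "Opt0 (\<lambda>u v. h (u - v)) N x p Q = {zs}"
  proof (intro equalityI subsetI)
    fix z assume "z \<in> Opt0 (\<lambda>u v. h (u - v)) N x p Q"
    then have z: "z \<in> extensional {1..N}" "z 1 = 0" "dual z = dual zs"
      using OT \<open>0 \<le> dual zs\<close> by (auto simp: Opt0_def)
    then have "balanced z"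
      using max by (intro balanced_if_maximal) simp
    with z zs show "z \<in> {zs}"
      using balanced_unique[OF _ balanced_if_maximal[OF max]] by simp
  qed (use zs OT \<open>0 \<le> dual zs\<close> in \<open>auto simp: Opt0_def\<close>)
  then show ?thesis
    by blast
qed

end
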